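(* Let $G_1,\ldots,G_l$ be directed acyclic graphs with pairwise disjoint node sets, $n_i=|V(G_i)|$, $n=\sum_in_i$, where the nodes of each $G_i$ are indexed $1,\ldots,n_i$ according to a topological ordering (so every edge $(a,b)$ of $G_i$ satisfies $a>b$). Let $S$ be a sequence of length $n$ in which each $G_i$ occurs exactly $n_i$ times and no two consecutive entries are equal; identify the $j$th occurrence of $G_i$ in $S$ with the node of $G_i$ of index $j$, and let $T(w)=k$ if the node $w$ is identified with position $k$ of $S$. Let $G$ be the graph with node set $\bigcup_iV(G_i)$ and edge set $\bigcup_iE(G_i)$ together with, for each $k=1,\ldots,n-1$, an edge from the node identified with position $k$ to the node identified with position $k+1$. Let $v$ be the node with $T(v)=1$ and $V_C=\{v\}$. Then the LTI network on $G$ with control node set $V_C$ is strongly structurally controllable.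
   Context: Graphs are directed. A directed acyclic graph has no directed cycles. $\mathcal{Q}(G)=\{A\in\mathbb{R}^{n\times n}:\text{for } i\neq j,\ A_{ij}\neq0\iff(j,i)\in E(G)\}$; for control nodes $V_C=\{j_1,\ldots,j_k\}$ (nodes labeled $1,\ldots,n$), $B=[e_{j_1},\ldots,e_{j_k}]$; the LTI network $\dot x=Ax+Bu$ on $G$ with control nodes $V_C$ is strongly structurally controllable if $(A,B)$ is controllable for every $A\in\mathcal{Q}(G)$. *)

theory Defs
  imports "Jordan_Normal_Form.DL_Rank"
begin

definition kalman_matrix :: "real mat \<Rightarrow> real mat \<Rightarrow> real mat" where
  "kalman_matrix A B = mat_of_cols (dim_row A)
     (concat (map (\<lambda>i. cols ((A ^\<^sub>m i) * B)) [0..<dim_row A]))"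

definition controllable :: "real mat \<Rightarrow> real mat \<Rightarrow> bool" where
  "controllable A B \<longleftrightarrow> vec_space.rank (dim_row A) (kalman_matrix A B) = dim_row A"

definition qual_class :: "nat \<Rightarrow> (nat \<times> nat) set \<Rightarrow> real mat set" where
  "qual_class n E = {A. A \<in> carrier_mat n n \<and>
      (\<forall>i<n. \<forall>j<n. i \<noteq> j \<longrightarrow> (A $$ (i,j) \<noteq> 0 \<longleftrightarrow> (j,i) \<in> E))}"

definition input_matrix :: "nat \<Rightarrow> nat list \<Rightarrow> real mat" where
  "input_matrix n VC = mat_of_cols n (map (\<lambda>j. unit_vec n j) VC)"

definition strongly_structurally_controllable ::
  "nat \<Rightarrow> (nat \<times> nat) set \<Rightarrow> nat list \<Rightarrow> bool" where
  "strongly_structurally_controllable n E VC \<longleftrightarrow>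
     (\<forall>A \<in> qual_class n E. controllable A (input_matrix n VC))"

text \<open>Sequence S (positions 0..<n, entry = index of the graph G_i).
  Local (1-based) index within its graph of the node identified with position k:
  the number of occurrences of S k among positions 0..k.\<close>
definition occ_index :: "(nat \<Rightarrow> nat) \<Rightarrow> nat \<Rightarrow> nat" where
  "occ_index S k = card {k'. k' \<le> k \<and> S k' = S k}"

text \<open>Edges of the combined graph G, with nodes identified with positions 0..<n of S:
  edges of each G_i (in local indices Eg i), plus path edges k -> k+1.\<close>
definition combined_edges ::
  "nat \<Rightarrow> (nat \<Rightarrow> nat) \<Rightarrow> (nat \<Rightarrow> (nat \<times> nat) set) \<Rightarrow> (nat \<times> nat) set" where
  "combined_edges n S Eg =
     {(k, k'). k < n \<and> k' < n \<and> S k = S k' \<and> (occ_index S k, occ_index S k') \<in> Eg (S k)}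
     \<union> {(k, Suc k) | k. Suc k < n}"

end

theory Submission
  imports Defs
begin

text \<open>Order the nodes by their position in S. Every edge of some G_i then points to an
  earlier position (topological indices decrease along edges, occurrence indices increase
  with the position), and the only edges to later positions are the path edges k -> k+1.
  Hence, in this order, every A in Q(G) is upper Hessenberg with nowhere vanishing
  subdiagonal. Starting from the unit vector of the first node, the Krylov vector A^k e is
  supported on the first k+1 positions with a nonzero entry at position k, so the Kalman
  matrix is triangular with nonzero diagonal up to a permutation of its rows.\<close>

lemma pow_mat_Suc_left:
  assumes "A \<in> carrier_mat n n"
  shows "A ^\<^sub>m Suc k = A * A ^\<^sub>m k"
proof (induction k)
  case (Suc k)
  have "A ^\<^sub>m Suc (Suc k) = (A * A ^\<^sub>m k) * A" using Suc by simp
  also have "\<dots> = A * (A ^\<^sub>m k * A)" using assms by (simp add: assoc_mult_mat[of _ n n _ n _ n])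
  finally show ?case by simp
qed (use assms in simp)

lemma kalman_matrix_single_input:
  assumes A: "A \<in> carrier_mat n n" and b: "b \<in> carrier_vec n"
  shows "kalman_matrix A (mat_of_cols n [b]) = mat_of_cols n (map (\<lambda>k. (A ^\<^sub>m k) *\<^sub>v b) [0..<n])"
proof -
  have B: "mat_of_cols n [b] \<in> carrier_mat n 1" using mat_of_cols_carrier(1)[of n "[b]"] by simp
  have "cols ((A ^\<^sub>m k) * mat_of_cols n [b]) = [(A ^\<^sub>m k) *\<^sub>v b]" for k
    using A b col_mult2[OF pow_carrier_mat[OF A] B, of 0] by (intro nth_equalityI) auto
  then show ?thesis
    using A unfolding kalman_matrix_def by (simp add: map_concat)
qed

lemma rank_mat_of_cols_staircase:
  fixes w :: "nat \<Rightarrow> 'a :: field vec"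
  assumes bij: "bij_betw lab {0..<n} {0..<n}"
    and below: "\<And>k m. k < m \<Longrightarrow> m < n \<Longrightarrow> w k $ lab m = 0"
    and diag: "\<And>k. k < n \<Longrightarrow> w k $ lab k \<noteq> 0"
  shows "vec_space.rank n (mat_of_cols n (map w [0..<n])) = n"
proof -
  define K where "K = mat_of_cols n (map w [0..<n])"
  have K: "K \<in> carrier_mat n n" unfolding K_def using mat_of_cols_carrier(1)[of n "map w [0..<n]"] by simp
  have lab: "\<And>m. m < n \<Longrightarrow> lab m < n" using bij by (auto simp: bij_betw_def)
  have "det K \<noteq> 0"
  proof
    assume "det K = 0"
    then obtain v where v: "v \<in> carrier_vec n" "v \<noteq> 0\<^sub>v n" "K *\<^sub>v v = 0\<^sub>v n"
      using det_0_iff_vec_prod_zero_field[OF K] by auto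
    define supp where "supp = {j. j < n \<and> v $ j \<noteq> 0}"
    define k where "k = Max supp"
    have "supp \<noteq> {}" using v(1,2) unfolding supp_def by (auto intro: eq_vecI)
    then have k: "k < n" "v $ k \<noteq> 0" using Max_in[of supp] unfolding k_def supp_def by auto
    have above_k: "v $ j = 0" if "k < j" "j < n" for j
      using Max_ge[of supp j] that unfolding k_def supp_def by fastforce
    \<comment> \<open>Columns j < k vanish in row lab k, coefficients j > k vanish in v.\<close>
    have "(K *\<^sub>v v) $ lab k = (\<Sum>j\<in>{0..<n}. w j $ lab k * v $ j)"
      using K v(1) lab k unfolding K_def by (auto simp: scalar_prod_def mat_of_cols_index intro!: sum.cong)
    also have "\<dots> = (\<Sum>j\<in>{k}. w j $ lab k * v $ j)"
    proof (rule sum.mono_neutral_right)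
      show "\<forall>j\<in>{0..<n} - {k}. w j $ lab k * v $ j = 0"
        using k below above_k by (auto simp: neq_iff)
    qed (use k in auto)
    finally have "(K *\<^sub>v v) $ lab k \<noteq> 0" using diag k by simp
    then show False using v(3) lab k by simp
  qed
  then show ?thesis using vec_space.det_rank_iff[OF K] unfolding K_def by simp
qed

lemma mult_mat_vec_index_reindex:
  assumes A: "A \<in> carrier_mat n n" and v: "v \<in> carrier_vec n"
    and bij: "bij_betw lab {0..<n} {0..<n}" and i: "i < n"
  shows "(A *\<^sub>v v) $ i = (\<Sum>p\<in>{0..<n}. A $$ (i, lab p) * v $ lab p)"
proof -
  have "(A *\<^sub>v v) $ i = (\<Sum>j\<in>{0..<n}. A $$ (i, j) * v $ j)"
    using A v i by (auto simp: scalar_prod_def intro!: sum.cong)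
  also have "\<dots> = (\<Sum>p\<in>{0..<n}. A $$ (i, lab p) * v $ lab p)"
    using sum.reindex_bij_betw[OF bij, of "\<lambda>j. A $$ (i, j) * v $ j"] by simp
  finally show ?thesis .
qed

text \<open>Hypotheses zero and sub say that A is upper Hessenberg with nonzero subdiagonal with
  respect to the order lab of the coordinates.\<close>
lemma hessenberg_mult_vec_staircase:
  fixes A :: "'a :: field mat"
  assumes A: "A \<in> carrier_mat n n" and bij: "bij_betw lab {0..<n} {0..<n}"
    and zero: "\<And>m p. m < n \<Longrightarrow> p < n \<Longrightarrow> Suc p < m \<Longrightarrow> A $$ (lab m, lab p) = 0"
    and sub: "\<And>k. Suc k < n \<Longrightarrow> A $$ (lab (Suc k), lab k) \<noteq> 0"
    and v: "v \<in> carrier_vec n"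
    and below: "\<And>m. k < m \<Longrightarrow> m < n \<Longrightarrow> v $ lab m = 0"
    and last: "v $ lab k \<noteq> 0"
    and k: "Suc k < n"
  shows "\<And>m. Suc k < m \<Longrightarrow> m < n \<Longrightarrow> (A *\<^sub>v v) $ lab m = 0"
    and "(A *\<^sub>v v) $ lab (Suc k) \<noteq> 0"
proof -
  have lab: "\<And>m. m < n \<Longrightarrow> lab m < n" using bij by (auto simp: bij_betw_def)
  have truncate: "(A *\<^sub>v v) $ lab m = (\<Sum>p\<in>{0..k}. A $$ (lab m, lab p) * v $ lab p)" if "m < n" for m
  proof -
    have "(A *\<^sub>v v) $ lab m = (\<Sum>p\<in>{0..<n}. A $$ (lab m, lab p) * v $ lab p)"
      using mult_mat_vec_index_reindex[OF A v bij lab[OF that]] .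
    also have "\<dots> = (\<Sum>p\<in>{0..k}. A $$ (lab m, lab p) * v $ lab p)"
      using k below by (intro sum.mono_neutral_right) auto
    finally show ?thesis .
  qed
  show "(A *\<^sub>v v) $ lab m = 0" if "Suc k < m" "m < n" for m
    using that k zero by (auto simp: truncate intro!: sum.neutral)
  have "(A *\<^sub>v v) $ lab (Suc k) = (\<Sum>p\<in>{k}. A $$ (lab (Suc k), lab p) * v $ lab p)"
    unfolding truncate[OF k] using k zero by (intro sum.mono_neutral_right) auto
  then show "(A *\<^sub>v v) $ lab (Suc k) \<noteq> 0" using sub[OF k] last by simp
qed

lemma hessenberg_controllable:
  fixes A :: "real mat"
  assumes A: "A \<in> carrier_mat n n" and n: "0 < n" and bij: "bij_betw lab {0..<n} {0..<n}"
    and zero: "\<And>m p. m < n \<Longrightarrow> p < n \<Longrightarrow> Suc p < m \<Longrightarrow> A $$ (lab m, lab p) = 0"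
    and sub: "\<And>k. Suc k < n \<Longrightarrow> A $$ (lab (Suc k), lab k) \<noteq> 0"
  shows "controllable A (input_matrix n [lab 0])"
proof -
  have inj: "inj_on lab {0..<n}" and lab: "\<And>m. m < n \<Longrightarrow> lab m < n"
    using bij by (auto simp: bij_betw_def)
  define w where "w k = (A ^\<^sub>m k) *\<^sub>v unit_vec n (lab 0)" for k
  have w: "w k \<in> carrier_vec n" for k
    unfolding w_def using A by (intro mult_mat_vec_carrier[of _ n n]) auto
  have w_Suc: "w (Suc k) = A *\<^sub>v w k" for k
    unfolding w_def pow_mat_Suc_left[OF A] using assoc_mult_mat_vec[OF A pow_carrier_mat[OF A, of k]] by simp
  have staircase: "(\<forall>m. k < m \<longrightarrow> m < n \<longrightarrow> w k $ lab m = 0) \<and> w k $ lab k \<noteq> 0" if "k < n" for k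
    using that
  proof (induction k)
    case 0
    have "lab m \<noteq> lab 0" if "0 < m" "m < n" for m
      using inj_onD[OF inj, of m 0] that n by auto
    then show ?case using A lab n by (auto simp: w_def)
  next
    case (Suc k)
    then show ?case
      using hessenberg_mult_vec_staircase[OF A bij zero sub w, of k] by (auto simp: w_Suc)
  qed
  have "vec_space.rank n (mat_of_cols n (map w [0..<n])) = n"
    using staircase by (intro rank_mat_of_cols_staircase[OF bij]) auto
  moreover have "kalman_matrix A (input_matrix n [lab 0]) = mat_of_cols n (map w [0..<n])"
    unfolding input_matrix_def w_def[abs_def] using A by (simp add: kalman_matrix_single_input)
  ultimately show ?thesis using A unfolding controllable_def by simp
qed

lemma qual_class_relabel_iff:
  assumes A: "A \<in> qual_class n ((\<lambda>(k, k'). (lab k, lab k')) ` E)"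
    and bij: "bij_betw lab {0..<n} {0..<n}" and E: "E \<subseteq> {0..<n} \<times> {0..<n}"
    and p: "p < n" and m: "m < n" and pm: "p \<noteq> m"
  shows "A $$ (lab m, lab p) \<noteq> 0 \<longleftrightarrow> (p, m) \<in> E"
proof -
  have inj: "inj_on lab {0..<n}" and lab: "\<And>m. m < n \<Longrightarrow> lab m < n"
    using bij by (auto simp: bij_betw_def)
  have "lab m \<noteq> lab p" using inj_onD[OF inj, of m p] p m pm by auto
  then have "A $$ (lab m, lab p) \<noteq> 0 \<longleftrightarrow> (lab p, lab m) \<in> (\<lambda>(k, k'). (lab k, lab k')) ` E"
    using A lab p m unfolding qual_class_def by blast
  also have "\<dots> \<longleftrightarrow> (p, m) \<in> E"
  proof
    assume "(lab p, lab m) \<in> (\<lambda>(k, k'). (lab k, lab k')) ` E"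
    then obtain a b where ab: "(a, b) \<in> E" "lab a = lab p" "lab b = lab m" by auto
    with E have "a = p" "b = m" using inj_onD[OF inj] p m by auto
    with ab show "(p, m) \<in> E" by simp
  qed force
  finally show ?thesis .
qed

lemma occ_index_mono:
  assumes "p \<le> m" and "S p = S m"
  shows "occ_index S p \<le> occ_index S m"
  unfolding occ_index_def using assms by (intro card_mono) auto

lemma combined_edges_subset: "combined_edges n S Eg \<subseteq> {0..<n} \<times> {0..<n}"
  unfolding combined_edges_def by auto

lemma combined_edges_path: "Suc k < n \<Longrightarrow> (k, Suc k) \<in> combined_edges n S Eg"
  unfolding combined_edges_def by auto

lemma combined_edges_backward_or_next:
  assumes range: "\<forall>k<n. S k < l" and topological: "\<forall>i<l. \<forall>(a, b) \<in> Eg i. a > b"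
    and edge: "(p, m) \<in> combined_edges n S Eg"
  shows "m < p \<or> m = Suc p"
proof (rule ccontr)
  assume "\<not> (m < p \<or> m = Suc p)"
  then have "p \<le> m" "m \<noteq> Suc p" by auto
  then have "p < n" "S p = S m" "(occ_index S p, occ_index S m) \<in> Eg (S p)"
    using edge unfolding combined_edges_def by auto
  then have "occ_index S m < occ_index S p" using range topological by fastforce
  with occ_index_mono[OF \<open>p \<le> m\<close> \<open>S p = S m\<close>] show False by simp
qed

theorem proposition4:
  fixes l n :: nat
    and S :: "nat \<Rightarrow> nat"
    and Eg :: "nat \<Rightarrow> (nat \<times> nat) set"
    and lab :: "nat \<Rightarrow> nat"
  assumes "0 < n"
    and "\<forall>k<n. S k < l"
    and "\<forall>i<l. \<exists>k<n. S k = i"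
    and "\<forall>k. Suc k < n \<longrightarrow> S k \<noteq> S (Suc k)"
    and "\<forall>i<l. Eg i \<subseteq> {1..card {k. k < n \<and> S k = i}} \<times> {1..card {k. k < n \<and> S k = i}}"
    and "\<forall>i<l. \<forall>(a, b) \<in> Eg i. a > b"
    and "bij_betw lab {0..<n} {0..<n}"
  shows "strongly_structurally_controllable n
           ((\<lambda>(k, k'). (lab k, lab k')) ` combined_edges n S Eg) [lab 0]"
  unfolding strongly_structurally_controllable_def
proof
  fix A assume A: "A \<in> qual_class n ((\<lambda>(k, k'). (lab k, lab k')) ` combined_edges n S Eg)"
  note entry_iff = qual_class_relabel_iff[OF A assms(7) combined_edges_subset]
  show "controllable A (input_matrix n [lab 0])"
  proof (rule hessenberg_controllable[OF _ assms(1,7)])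
    show "A \<in> carrier_mat n n" using A by (simp add: qual_class_def)
    show "A $$ (lab m, lab p) = 0" if "m < n" "p < n" "Suc p < m" for m p
      using that entry_iff[of p m] combined_edges_backward_or_next[OF assms(2,6), of p m] by auto
    show "A $$ (lab (Suc k), lab k) \<noteq> 0" if "Suc k < n" for k
      using that entry_iff[of k "Suc k"] combined_edges_path[of k n S Eg] by auto
  qed
qed

end
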